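(* Let $\mathcal{M}$ be a mechanism with $n$ agents and let $D=(\mathbf{d}^0,\mathbf{d}^1,\dots,\mathbf{d}^T)$ be generated by best-response dynamics with random player order. Fix an agent $i$, a property $P_1$ of the others' declarations $\mathbf{d}_{-i}$, and a property $P_2$ of agent $i$'s declaration $d_i$. Suppose that for every profile, if $P_1(\mathbf{d}_{-i})$ is false then every best response $d_i$ of agent $i$ to $\mathbf{d}_{-i}$ satisfies $P_2(d_i)$. Then for every $\epsilon>0$, if $T>\epsilon^{-1}n$, with probability at least $1-e^{-T\epsilon^2/32n}$ there are at least $(\frac12-\epsilon)T$ steps $t$ for which $P_1(\mathbf{d}^t_{-i})$ or $P_2(d_i^t)$ is true.
   Context: Best-response dynamics with random player order: starting from an initial profile $\mathbf{d}^0$, at each step $t=1,\dots,T$ one agent is chosen independently and uniformly at random from the $n$ agents; that agent may change his declaration to a best response, i.e. a declaration $d\in\arg\max_d u_i(d,\mathbf{d}_{-i}^{t-1})$ maximizing his utility given the others' current declarations (he keeps his previous declaration if he cannot improve his utility); all other agents keep their declarations. *)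

theory Defs
  imports "HOL-Probability.Probability"
begin

text \<open>Agents are 0,...,n-1. A profile of declarations is a function nat => 'd
(entries at indices >= n are irrelevant and never change).
Utilities: u i d is the utility of agent i under profile d.\<close>

definition others :: "nat \<Rightarrow> nat \<Rightarrow> (nat \<Rightarrow> 'd) \<Rightarrow> (nat \<Rightarrow> 'd option)" where
  "others n i d = (\<lambda>j. if j < n \<and> j \<noteq> i then Some (d j) else None)"

definition best_responses :: "(nat \<Rightarrow> (nat \<Rightarrow> 'd) \<Rightarrow> real) \<Rightarrow> nat \<Rightarrow> (nat \<Rightarrow> 'd) \<Rightarrow> 'd set" where
  "best_responses u i d = {x. \<forall>y. u i (d(i := y)) \<le> u i (d(i := x))}"

text \<open>A (history-dependent, possibly adversarial) tie-breaking rule: given the history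
of chosen agents, the chosen agent i and the current profile d, it returns i's new
declaration.\<close>
definition valid_rule :: "nat \<Rightarrow> (nat \<Rightarrow> (nat \<Rightarrow> 'd) \<Rightarrow> real) \<Rightarrow>
    (nat list \<Rightarrow> nat \<Rightarrow> (nat \<Rightarrow> 'd) \<Rightarrow> 'd) \<Rightarrow> bool" where
  "valid_rule n u ch \<longleftrightarrow> (\<forall>h i d. i < n \<longrightarrow>
     (if d i \<in> best_responses u i d then ch h i d = d i
      else ch h i d \<in> best_responses u i d))"

fun brd_profile :: "(nat list \<Rightarrow> nat \<Rightarrow> (nat \<Rightarrow> 'd) \<Rightarrow> 'd) \<Rightarrow> (nat \<Rightarrow> 'd) \<Rightarrow> nat list \<Rightarrow> nat \<Rightarrow> (nat \<Rightarrow> 'd)" where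
  "brd_profile ch d0 as 0 = d0"
| "brd_profile ch d0 as (Suc t) =
     (let p = brd_profile ch d0 as t; a = as ! t in p(a := ch (take t as) a p))"

text \<open>Sequences of T agents chosen independently and uniformly from the n agents.\<close>
definition agent_seqs :: "nat \<Rightarrow> nat \<Rightarrow> nat list set" where
  "agent_seqs n T = {as. length as = T \<and> set as \<subseteq> {..<n}}"

end

theory Submission imports Defs begin

text \<open>Call step t good if P1 or P2 holds at d^t, and attach to each profile a potential
that is 0 once P2 holds for agent i, and n or n - 1 otherwise, according to whether P1 holds.
Each time agent i is chosen at a bad profile he switches to a declaration satisfying P2, so
the potential drops by n - 1; any other agent changes it by at most 1. Hence
(#bad steps - #good steps) + potential has nonpositive drift under a uniformly random move,
with increments bounded by 1 except for agent i's, which occurs with probability 1/n. The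
exponential moment argument behind Azuma's inequality then bounds, over all n^T equally likely
agent sequences, the fraction of those with fewer than (1/2 - \<epsilon>) T good steps.\<close>

lemma exp_le_1_add_add_square:
  fixes x :: real
  assumes "\<bar>x\<bar> \<le> 1"
  shows "exp x \<le> 1 + x + x\<^sup>2"
proof (cases "0 \<le> x")
  case True
  then show ?thesis using exp_bound[of x] assms by auto
next
  case False
  have "1 - x \<le> exp (-x)" using exp_ge_add_one_self[of "-x"] by simp
  then have "exp x \<le> 1 / (1 - x)" using False by (simp add: exp_minus field_simps)
  also have "\<dots> \<le> 1 + x + x\<^sup>2"
  proof -
    have "x * x\<^sup>2 \<le> 0" using False by (simp add: mult_nonpos_nonneg)
    then have "1 \<le> (1 - x) * (1 + x + x\<^sup>2)"
      by (simp add: algebra_simps power2_eq_square)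
    then show ?thesis using False by (simp add: field_simps)
  qed
  finally show ?thesis .
qed

lemma sum_exp_le_card_plus_sum_squares:
  fixes x :: "'a \<Rightarrow> real"
  assumes "\<And>a. a \<in> A \<Longrightarrow> \<bar>x a\<bar> \<le> 1" and "(\<Sum>a\<in>A. x a) \<le> 0"
  shows "(\<Sum>a\<in>A. exp (x a)) \<le> card A + (\<Sum>a\<in>A. (x a)\<^sup>2)"
proof -
  have "(\<Sum>a\<in>A. exp (x a)) \<le> (\<Sum>a\<in>A. 1 + x a + (x a)\<^sup>2)"
    using assms(1) by (intro sum_mono exp_le_1_add_add_square)
  also have "\<dots> = card A + (\<Sum>a\<in>A. x a) + (\<Sum>a\<in>A. (x a)\<^sup>2)"
    by (simp add: sum.distrib)
  finally show ?thesis using assms(2) by linarith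
qed

lemma card_mult_le_sum:
  fixes f :: "'a \<Rightarrow> real"
  assumes "finite S" and "B \<subseteq> S" and "\<And>x. x \<in> S \<Longrightarrow> 0 \<le> f x" and "\<And>x. x \<in> B \<Longrightarrow> c \<le> f x"
  shows "real (card B) * c \<le> (\<Sum>x\<in>S. f x)"
proof -
  have "real (card B) * c = (\<Sum>x\<in>B. c)" by simp
  also have "\<dots> \<le> (\<Sum>x\<in>B. f x)" using assms(4) by (rule sum_mono)
  also have "\<dots> \<le> (\<Sum>x\<in>S. f x)" using assms(1-3) by (intro sum_mono2) auto
  finally show ?thesis .
qed

lemma prob_pmf_of_set_ge:
  assumes "finite S" and "S \<noteq> {}" and "real (card {x \<in> S. \<not> P x}) \<le> real (card S) * \<delta>"
  shows "measure_pmf.prob (pmf_of_set S) {x. P x} \<ge> 1 - \<delta>"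
proof -
  have "{x \<in> S. P x} = S - {x \<in> S. \<not> P x}" by blast
  then have "real (card {x \<in> S. P x}) = real (card S) - real (card {x \<in> S. \<not> P x})"
    using assms(1) by (simp add: card_Diff_subset of_nat_diff card_mono)
  moreover have "measure_pmf.prob (pmf_of_set S) {x. P x} = card {x \<in> S. P x} / card S"
    using measure_pmf_of_set[OF assms(2,1)] by (simp add: Int_def conj_commute)
  ultimately have "real (card S) * 1 \<le> real (card S) * (\<delta> + measure_pmf.prob (pmf_of_set S) {x. P x})"
    using assms(3) by (simp add: field_simps)
  moreover have "card S > 0" using assms(1,2) by (simp add: card_gt_0_iff)
  ultimately show ?thesis by simp
qed

lemma agent_seqs_0: "agent_seqs n 0 = {[]}"
  by (auto simp: agent_seqs_def)

lemma agent_seqs_Suc: "agent_seqs n (Suc T) = (\<lambda>(as, a). as @ [a]) ` (agent_seqs n T \<times> {..<n})"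
proof
  show "agent_seqs n (Suc T) \<subseteq> (\<lambda>(as, a). as @ [a]) ` (agent_seqs n T \<times> {..<n})"
  proof
    fix xs assume xs: "xs \<in> agent_seqs n (Suc T)"
    then have "xs \<noteq> []" by (auto simp: agent_seqs_def)
    then have "xs = butlast xs @ [last xs]" and "butlast xs \<in> agent_seqs n T" and "last xs < n"
      using xs by (auto simp: agent_seqs_def dest: in_set_butlastD intro!: subsetD[OF _ last_in_set])
    then show "xs \<in> (\<lambda>(as, a). as @ [a]) ` (agent_seqs n T \<times> {..<n})"
      by (metis (no_types, lifting) SigmaI case_prod_conv image_eqI lessThan_iff)
  qed
qed (auto simp: agent_seqs_def)

lemma finite_agent_seqs: "finite (agent_seqs n T)"
  using finite_lists_length_eq[of "{..<n}" T] by (simp add: agent_seqs_def conj_commute)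

lemma card_agent_seqs: "card (agent_seqs n T) = n ^ T"
  using card_lists_length_eq[of "{..<n}" T] by (simp add: agent_seqs_def conj_commute)

text \<open>The supermartingale inequality for uniformly random agent sequences, in counting form.\<close>

lemma sum_agent_seqs_le:
  fixes F :: "nat list \<Rightarrow> real"
  assumes "\<And>as. (\<Sum>a<n. F (as @ [a])) \<le> real n * F as"
  shows "(\<Sum>as\<in>agent_seqs n T. F as) \<le> real n ^ T * F []"
proof (induction T)
  case 0
  show ?case by (simp add: agent_seqs_0)
next
  case (Suc T)
  have inj: "inj_on (\<lambda>(as, a). as @ [a]) (agent_seqs n T \<times> {..<n})"
    by (auto simp: inj_on_def)
  have "(\<Sum>as\<in>agent_seqs n (Suc T). F as) = (\<Sum>as\<in>agent_seqs n T. \<Sum>a<n. F (as @ [a]))"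
    unfolding agent_seqs_Suc sum.reindex[OF inj] sum.cartesian_product
    by (simp add: split_def)
  also have "\<dots> \<le> (\<Sum>as\<in>agent_seqs n T. real n * F as)"
    using assms by (rule sum_mono)
  also have "\<dots> \<le> real n * (real n ^ T * F [])"
    using Suc by (simp add: sum_distrib_left[symmetric] mult_left_mono)
  finally show ?case by (simp add: algebra_simps)
qed

lemma brd_profile_append:
  "t \<le> length as \<Longrightarrow> brd_profile ch d0 (as @ bs) t = brd_profile ch d0 as t"
  by (induction t) (auto simp: Let_def nth_append)

lemma brd_profile_snoc:
  "brd_profile ch d0 (as @ [a]) (Suc (length as)) =
     (brd_profile ch d0 as (length as))(a := ch as a (brd_profile ch d0 as (length as)))"
  by (simp add: Let_def brd_profile_append)

context
  fixes n i :: nat and P1 :: "(nat \<Rightarrow> 'd option) \<Rightarrow> bool" and P2 :: "'d \<Rightarrow> bool"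
begin

definition good_profile :: "(nat \<Rightarrow> 'd) \<Rightarrow> bool" where
  "good_profile p \<longleftrightarrow> P1 (others n i p) \<or> P2 (p i)"

definition bad_sign :: "(nat \<Rightarrow> 'd) \<Rightarrow> real" where
  "bad_sign p = (if good_profile p then -1 else 1)"

definition potential :: "(nat \<Rightarrow> 'd) \<Rightarrow> real" where
  "potential p = (if P2 (p i) then 0 else if P1 (others n i p) then real n else real n - 1)"

lemma potential_le: "potential p \<le> real n"
  by (simp add: potential_def)

definition increment :: "(nat \<Rightarrow> 'd) \<Rightarrow> (nat \<Rightarrow> 'd) \<Rightarrow> real" where
  "increment p q = bad_sign q + potential q - potential p"

lemma abs_increment_other_le_1: "a \<noteq> i \<Longrightarrow> \<bar>increment p (p(a := x))\<bar> \<le> 1"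
  by (auto simp: increment_def bad_sign_def potential_def good_profile_def)

lemma abs_increment_le: "i < n \<Longrightarrow> \<bar>increment p q\<bar> \<le> real n + 1"
  by (auto simp: increment_def bad_sign_def potential_def)

lemma sum_square_increment_le:
  assumes "i < n"
  shows "(\<Sum>a<n. (increment p (p(a := f a)))\<^sup>2) \<le> real n ^ 2 + 3 * real n"
proof -
  have "(\<Sum>a<n. (increment p (p(a := f a)))\<^sup>2)
      = (increment p (p(i := f i)))\<^sup>2 + (\<Sum>a\<in>{..<n}-{i}. (increment p (p(a := f a)))\<^sup>2)"
    using assms by (simp add: sum.remove)
  also have "\<dots> \<le> (real n + 1)\<^sup>2 + (\<Sum>a\<in>{..<n}-{i}. 1)"
    using abs_increment_le[OF assms] abs_increment_other_le_1
    by (intro add_mono sum_mono) (auto simp: abs_le_square_iff[symmetric] abs_square_le_1)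
  also have "\<dots> = real n ^ 2 + 3 * real n"
    using assms by (simp add: power2_eq_square of_nat_diff algebra_simps)
  finally show ?thesis .
qed

definition history_value ::
    "(nat list \<Rightarrow> nat \<Rightarrow> (nat \<Rightarrow> 'd) \<Rightarrow> 'd) \<Rightarrow> (nat \<Rightarrow> 'd) \<Rightarrow> nat list \<Rightarrow> real" where
  "history_value ch d0 as = (\<Sum>t\<in>{1..length as}. bad_sign (brd_profile ch d0 as t))
                            + potential (brd_profile ch d0 as (length as))"

lemma history_value_Nil: "history_value ch d0 [] = potential d0"
  by (simp add: history_value_def)

lemma history_value_snoc:
  "history_value ch d0 (as @ [a]) = history_value ch d0 as
     + increment (brd_profile ch d0 as (length as)) (brd_profile ch d0 (as @ [a]) (Suc (length as)))"
proof -
  have "(\<Sum>t\<in>{1..length as}. bad_sign (brd_profile ch d0 (as @ [a]) t))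
      = (\<Sum>t\<in>{1..length as}. bad_sign (brd_profile ch d0 as t))"
    by (intro sum.cong) (simp_all add: brd_profile_append del: brd_profile.simps)
  then show ?thesis
    by (simp add: history_value_def increment_def brd_profile_append del: brd_profile.simps)
qed

lemma history_value_ge:
  assumes "i < n"
  shows "real (length as) - 2 * real (card {t \<in> {1..length as}. good_profile (brd_profile ch d0 as t)})
           \<le> history_value ch d0 as"
proof -
  have "(\<Sum>t\<in>{1..length as}. bad_sign (brd_profile ch d0 as t))
      = (\<Sum>t\<in>{1..length as}. 1 - 2 * of_bool (good_profile (brd_profile ch d0 as t)))"
    by (intro sum.cong) (simp_all add: bad_sign_def)
  also have "\<dots> = real (length as) - 2 * real (card {t \<in> {1..length as}. good_profile (brd_profile ch d0 as t)})"
    by (simp add: sum_subtractf sum_distrib_left[symmetric] Int_def conj_commute)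
  finally show ?thesis
    using assms by (simp add: history_value_def potential_def)
qed

context
  fixes u :: "nat \<Rightarrow> (nat \<Rightarrow> 'd) \<Rightarrow> real" and ch :: "nat list \<Rightarrow> nat \<Rightarrow> (nat \<Rightarrow> 'd) \<Rightarrow> 'd"
  assumes agent: "i < n" and valid: "valid_rule n u ch"
    and forced: "\<And>d x. \<not> P1 (others n i d) \<Longrightarrow> x \<in> best_responses u i d \<Longrightarrow> P2 x"
begin

lemma sum_increment_nonpos: "(\<Sum>a<n. increment p (p(a := ch h a p))) \<le> 0"
proof -
  define D where "D a = increment p (p(a := ch h a p))" for a
  have "ch h i p \<in> best_responses u i p"
    using agent valid unfolding valid_rule_def by (metis (full_types))
  then have i_forced: "\<not> P1 (others n i p) \<Longrightarrow> P2 (ch h i p)"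
    using forced by blast
  have i_others: "others n i (p(i := ch h i p)) = others n i p"
    by (auto simp: others_def)
  have other_agents: "D a \<le> 1 \<and> (P2 (p i) \<longrightarrow> D a = -1) \<and> (P1 (others n i p) \<longrightarrow> D a \<le> 0)"
    if "a \<noteq> i" for a
    using that by (auto simp: D_def increment_def bad_sign_def potential_def good_profile_def)
  have split: "(\<Sum>a<n. D a) = D i + (\<Sum>a\<in>{..<n}-{i}. D a)"
    using agent by (simp add: sum.remove)
  have card_others: "real (card ({..<n}-{i})) = real n - 1"
    using agent by (simp add: of_nat_diff)
  consider "P2 (p i)" | "\<not> P2 (p i)" "P1 (others n i p)" | "\<not> P2 (p i)" "\<not> P1 (others n i p)"
    by blast
  then have "(\<Sum>a<n. D a) \<le> 0"
  proof cases
    case 1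
    then have "D i \<le> real n - 1"
      using i_forced i_others by (auto simp: D_def increment_def bad_sign_def potential_def good_profile_def)
    moreover have "(\<Sum>a\<in>{..<n}-{i}. D a) = (\<Sum>a\<in>{..<n}-{i}. -1)"
      using other_agents 1 by (intro sum.cong) auto
    ultimately show ?thesis using split card_others by simp
  next
    case 2
    then have "D i \<le> -1"
      using i_others by (auto simp: D_def increment_def bad_sign_def potential_def good_profile_def)
    moreover have "(\<Sum>a\<in>{..<n}-{i}. D a) \<le> (\<Sum>a\<in>{..<n}-{i}. 0)"
      using other_agents 2 by (intro sum_mono) auto
    ultimately show ?thesis using split by simp
  next
    case 3
    then have "D i = - real n"
      using i_forced i_others by (auto simp: D_def increment_def bad_sign_def potential_def good_profile_def)
    moreover have "(\<Sum>a\<in>{..<n}-{i}. D a) \<le> (\<Sum>a\<in>{..<n}-{i}. 1)"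
      using other_agents by (intro sum_mono) auto
    ultimately show ?thesis using split card_others by simp
  qed
  then show ?thesis by (simp add: D_def)
qed

lemma sum_exp_increment_le:
  assumes "0 < \<epsilon>" and "\<epsilon> \<le> 1/2"
  shows "(\<Sum>a<n. exp (\<epsilon> / (16 * real n) * increment p (p(a := ch h a p))))
           \<le> real n * exp (\<epsilon>\<^sup>2 / (32 * real n))"
proof -
  define l where "l = \<epsilon> / (16 * real n)"
  define D where "D a = increment p (p(a := ch h a p))" for a
  have n: "real n \<ge> 1" using agent by simp
  have l: "0 \<le> l" using assms(1) by (simp add: l_def)
  have "\<epsilon> * real n \<le> 1/2 * real n"
    using assms(2) by (intro mult_right_mono) auto
  then have "\<epsilon> * (real n + 1) \<le> 16 * real n"
    unfolding distrib_left using n assms(2) by linarith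
  then have l_bound: "l * (real n + 1) \<le> 1"
    using n by (simp add: l_def divide_le_eq)
  have "\<bar>l * D a\<bar> \<le> 1" for a
  proof -
    have "\<bar>l * D a\<bar> = l * \<bar>D a\<bar>" using l by (simp add: abs_mult)
    also have "\<dots> \<le> l * (real n + 1)"
      using l abs_increment_le[OF agent] by (simp add: D_def mult_left_mono)
    finally show ?thesis using l_bound by linarith
  qed
  moreover have "(\<Sum>a<n. l * D a) \<le> 0"
    using sum_increment_nonpos l
    by (simp add: D_def sum_distrib_left[symmetric] mult_nonneg_nonpos)
  ultimately have "(\<Sum>a<n. exp (l * D a)) \<le> real n + (\<Sum>a<n. (l * D a)\<^sup>2)"
    using sum_exp_le_card_plus_sum_squares[of "{..<n}" "\<lambda>a. l * D a"] by simp
  also have "(\<Sum>a<n. (l * D a)\<^sup>2) = l\<^sup>2 * (\<Sum>a<n. (D a)\<^sup>2)"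
    by (simp add: power_mult_distrib sum_distrib_left)
  also have "\<dots> \<le> l\<^sup>2 * (real n ^ 2 + 3 * real n)"
    using sum_square_increment_le[OF agent] unfolding D_def by (intro mult_left_mono) auto
  also have "\<dots> = \<epsilon>\<^sup>2 * (real n + 3) / (256 * real n)"
    using n by (simp add: l_def power2_eq_square field_simps)
  also have "\<dots> \<le> real n * (\<epsilon>\<^sup>2 / (32 * real n))"
    using n by (simp add: divide_le_eq mult_left_mono)
  also have "real n + real n * (\<epsilon>\<^sup>2 / (32 * real n)) = real n * (1 + \<epsilon>\<^sup>2 / (32 * real n))"
    by (simp add: algebra_simps)
  also have "\<dots> \<le> real n * exp (\<epsilon>\<^sup>2 / (32 * real n))"
    using exp_ge_add_one_self[of "\<epsilon>\<^sup>2 / (32 * real n)"] by (intro mult_left_mono) auto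
  finally show ?thesis by (simp add: l_def D_def)
qed

lemma sum_exp_history_value_le:
  assumes "0 < \<epsilon>" and "\<epsilon> \<le> 1/2"
  shows "(\<Sum>as\<in>agent_seqs n T.
            exp (\<epsilon> / (16 * real n) * history_value ch d0 as - \<epsilon>\<^sup>2 / (32 * real n) * real (length as)))
         \<le> real n ^ T * exp (\<epsilon> / (16 * real n) * real n)"
proof -
  define l where "l = \<epsilon> / (16 * real n)"
  define c where "c = \<epsilon>\<^sup>2 / (32 * real n)"
  define F where "F as = exp (l * history_value ch d0 as - c * real (length as))" for as
  have l: "0 \<le> l" using assms(1) by (simp add: l_def)
  have "(\<Sum>a<n. F (as @ [a])) \<le> real n * F as" for as
  proof -
    define p where "p = brd_profile ch d0 as (length as)"
    have "F (as @ [a]) = F as * exp (- c) * exp (l * increment p (p(a := ch as a p)))" for a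
      by (simp add: F_def p_def history_value_snoc brd_profile_snoc algebra_simps
                    exp_add[symmetric] exp_diff del: brd_profile.simps)
    then have "(\<Sum>a<n. F (as @ [a])) = F as * exp (- c) * (\<Sum>a<n. exp (l * increment p (p(a := ch as a p))))"
      by (simp add: sum_distrib_left)
    also have "\<dots> \<le> F as * exp (- c) * (real n * exp c)"
      using sum_exp_increment_le[OF assms] by (intro mult_left_mono) (simp_all add: F_def l_def c_def)
    also have "\<dots> = real n * F as"
      by (simp add: exp_minus field_simps)
    finally show ?thesis .
  qed
  then have "(\<Sum>as\<in>agent_seqs n T. F as) \<le> real n ^ T * F []"
    by (rule sum_agent_seqs_le)
  also have "F [] \<le> exp (l * real n)"
    using potential_le[of d0] l by (simp add: F_def history_value_Nil mult_left_mono)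
  finally show ?thesis
    by (simp add: F_def l_def c_def mult_left_mono)
qed

lemma card_few_good_steps_le:
  assumes "0 < \<epsilon>" and "real n < \<epsilon> * real T"
  shows "real (card {as \<in> agent_seqs n T.
             real (card {t \<in> {1..T}. good_profile (brd_profile ch d0 as t)}) < (1/2 - \<epsilon>) * real T})
         \<le> real n ^ T * exp (- real T * \<epsilon>\<^sup>2 / (32 * real n))"
    (is "real (card ?B) \<le> _")
proof (cases "\<epsilon> \<le> 1/2")
  case False
  then have "(1/2 - \<epsilon>) * real T \<le> 0" by (simp add: mult_nonpos_nonneg)
  then have empty: "?B = {}" by (auto simp: not_less)
  show ?thesis unfolding empty by simp
next
  case True
  define l where "l = \<epsilon> / (16 * real n)"
  define c where "c = \<epsilon>\<^sup>2 / (32 * real n)"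
  have l: "0 \<le> l" using assms(1) by (simp add: l_def)
  have "exp (3 * c * real T) \<le> exp (l * history_value ch d0 as - c * real (length as))"
    if "as \<in> ?B" for as
  proof -
    have len: "length as = T" using that by (simp add: agent_seqs_def)
    have "2 * \<epsilon> * real T \<le> history_value ch d0 as"
      using history_value_ge[OF agent, of as ch d0] that len by (simp add: algebra_simps)
    then have "l * (2 * \<epsilon> * real T) \<le> l * history_value ch d0 as"
      using l by (rule mult_left_mono)
    moreover have "l * (2 * \<epsilon> * real T) = 4 * c * real T"
      by (simp add: l_def c_def power2_eq_square)
    ultimately show ?thesis using len by simp
  qed
  then have "real (card ?B) * exp (3 * c * real T)
      \<le> (\<Sum>as\<in>agent_seqs n T. exp (l * history_value ch d0 as - c * real (length as)))"
    by (intro card_mult_le_sum[OF finite_agent_seqs]) auto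
  also have "\<dots> \<le> real n ^ T * exp (l * real n)"
    using sum_exp_history_value_le[OF assms(1) True] by (simp add: l_def c_def)
  also have "\<dots> \<le> real n ^ T * exp (l * (\<epsilon> * real T))"
    using assms(2) l by (simp add: mult_left_mono)
  also have "l * (\<epsilon> * real T) = 2 * c * real T"
    by (simp add: l_def c_def power2_eq_square)
  finally have "real (card ?B) \<le> real n ^ T * exp (2 * c * real T) / exp (3 * c * real T)"
    by (simp add: field_simps)
  also have "\<dots> = real n ^ T * exp (2 * c * real T - 3 * c * real T)"
    by (subst exp_diff) simp
  also have "2 * c * real T - 3 * c * real T = - real T * \<epsilon>\<^sup>2 / (32 * real n)"
    by (simp add: c_def)
  finally show ?thesis .
qed

end

end

theorem lemma4p2:
  fixes n T i :: nat
    and u :: "nat \<Rightarrow> (nat \<Rightarrow> 'd) \<Rightarrow> real"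
    and ch :: "nat list \<Rightarrow> nat \<Rightarrow> (nat \<Rightarrow> 'd) \<Rightarrow> 'd"
    and d0 :: "nat \<Rightarrow> 'd"
    and P1 :: "(nat \<Rightarrow> 'd option) \<Rightarrow> bool"
    and P2 :: "'d \<Rightarrow> bool"
    and \<epsilon> :: real
  assumes "i < n"
    and "valid_rule n u ch"
    and "\<And>d x. \<not> P1 (others n i d) \<Longrightarrow> x \<in> best_responses u i d \<Longrightarrow> P2 x"
    and "\<epsilon> > 0"
    and "real T > real n / \<epsilon>"
  shows "measure_pmf.prob (pmf_of_set (agent_seqs n T))
           {as. real (card {t \<in> {1..T}. P1 (others n i (brd_profile ch d0 as t))
                                         \<or> P2 (brd_profile ch d0 as t i)})
                \<ge> (1/2 - \<epsilon>) * real T}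
         \<ge> 1 - exp (- real T * \<epsilon>^2 / (32 * real n))"
proof (rule prob_pmf_of_set_ge)
  show "finite (agent_seqs n T)" by (rule finite_agent_seqs)
  show "agent_seqs n T \<noteq> {}"
    using card_agent_seqs[of n T] assms(1) by auto
  have bound: "real n < \<epsilon> * real T"
    using assms(4,5) by (simp add: field_simps)
  have "real (card {as \<in> agent_seqs n T.
               real (card {t \<in> {1..T}. good_profile n i P1 P2 (brd_profile ch d0 as t)}) < (1/2 - \<epsilon>) * real T})
             \<le> real n ^ T * exp (- real T * \<epsilon>\<^sup>2 / (32 * real n))"
    by (rule card_few_good_steps_le[of i n u ch P1 P2]) (fact assms bound)+
  then show "real (card {as \<in> agent_seqs n T. \<not> (1/2 - \<epsilon>) * real T
            \<le> real (card {t \<in> {1..T}. P1 (others n i (brd_profile ch d0 as t)) \<or> P2 (brd_profile ch d0 as t i)})})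
        \<le> real (card (agent_seqs n T)) * exp (- real T * \<epsilon>^2 / (32 * real n))"
    by (simp add: card_agent_seqs good_profile_def not_le)
qed

end
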